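(* Every supertropical semiring is fully elementary.
   Context: A semiring $(X,+,0,\cdot)$: $(X,+,0)$ commutative monoid, $(X,\cdot)$ semigroup, distributivity, $0$ absorbing. For a unital semiring define $\nu:X\to X$, $\nu(x)=x+x$. A supertropical semiring is a unital commutative semiring $X$ such that $2=4$ in $X$ (where $n$ denotes $1+\dots+1$), for all $a,b\in X$ with $\nu(a)\ne\nu(b)$ one has $a+b\in\{a,b\}$, and for all $a,b$ with $\nu(a)=\nu(b)$ one has $a+b=\nu(a)$. Polynomials in $n$ variables are functions $X^n\to X$ represented by formal expressions $\sum_k a_k\prod_{j=1}^n x_j^{d_{k,j}}$ ($a_k\in X$). A polynomial is symmetric if represented by an expression which, with each monomial $a_k\prod_j x_j^{d_{k,j}}$, contains all monomials $a_k\prod_j x_{\sigma(j)}^{d_{k,j}}$, $\sigma\in S_n$ (up to reordering factors). $e_j$ is the sum of all products of $j$ distinct variables among $x_1,\dots,x_n$. $X$ is $n$-elementary if every symmetric polynomial $p$ in $n$ variables equals $r(e_1,\dots,e_n)$ as functions on $X^n$ for some polynomial $r$; fully elementary if $n$-elementary for all $n\in\mathbb{N}$. *)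

theory Defs
  imports "HOL-Combinatorics.Permutations"
begin

text \<open>Unital commutative semirings are the types of sort
  {comm_semiring_0, comm_monoid_mult} (no requirement 0 \<noteq> 1).\<close>

definition supertropical :: "'a::{comm_semiring_0, comm_monoid_mult} itself \<Rightarrow> bool" where
  "supertropical _ \<longleftrightarrow>
     ((1::'a) + 1 = 1 + 1 + 1 + 1) \<and>
     (\<forall>a b::'a. a + a \<noteq> b + b \<longrightarrow> (a + b = a \<or> a + b = b)) \<and>
     (\<forall>a b::'a. a + a = b + b \<longrightarrow> a + b = a + a)"

text \<open>A formal polynomial expression in n variables x_0..x_{n-1}: a finite set of
  monomials (a, d), standing for a * prod_{j<n} x_j ^ d j.\<close>

definition poly_eval :: "('a::{comm_semiring_0, comm_monoid_mult} \<times> (nat \<Rightarrow> nat)) set \<Rightarrow> nat \<Rightarrow> (nat \<Rightarrow> 'a) \<Rightarrow> 'a" where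
  "poly_eval P n x = (\<Sum>(a, d)\<in>P. a * (\<Prod>j<n. x j ^ d j))"

definition symmetric_expr :: "nat \<Rightarrow> ('a \<times> (nat \<Rightarrow> nat)) set \<Rightarrow> bool" where
  "symmetric_expr n P \<longleftrightarrow> finite P \<and>
     (\<forall>a d \<sigma>. (a, d) \<in> P \<longrightarrow> \<sigma> permutes {..<n} \<longrightarrow> (a, d \<circ> \<sigma>) \<in> P)"

definition elem_sym :: "nat \<Rightarrow> nat \<Rightarrow> (nat \<Rightarrow> 'a::{comm_semiring_0, comm_monoid_mult}) \<Rightarrow> 'a" where
  "elem_sym n j x = (\<Sum>S\<in>{S. S \<subseteq> {..<n} \<and> card S = j}. \<Prod>i\<in>S. x i)"

definition n_elementary :: "'a::{comm_semiring_0, comm_monoid_mult} itself \<Rightarrow> nat \<Rightarrow> bool" where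
  "n_elementary _ n \<longleftrightarrow>
     (\<forall>P::('a \<times> (nat \<Rightarrow> nat)) set. symmetric_expr n P \<longrightarrow>
        (\<exists>R::('a \<times> (nat \<Rightarrow> nat)) set. finite R \<and>
           (\<forall>x. poly_eval P n x = poly_eval R n (\<lambda>i. elem_sym n (Suc i) x))))"

definition fully_elementary :: "'a::{comm_semiring_0, comm_monoid_mult} itself \<Rightarrow> bool" where
  "fully_elementary T \<longleftrightarrow> (\<forall>n. n_elementary T n)"

end

(*
  A symmetric expression is a sum of orbit sums a * (sum of x^e over all rearrangements e of
  one exponent vector d), so it suffices to write each orbit sum as a monomial in the elementary
  symmetric polynomials. Sort the exponents as d_(0) >= ... >= d_(n-1) and rank the variables
  decreasingly in the nu-order. In a supertropical semiring a finite sum equals its nu-largest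
  term, or the ghost of that term if its nu-value is attained twice. The nu-largest term of
  e_(k+1) is the product of the k+1 top-ranked variables (the k-th layer), and the nu-largest term
  of the orbit sum is the product of the layers raised to the gaps d_(k) - d_(k+1). Both sides
  turn into the ghost of this common term exactly when some layer with a positive gap has a
  nu-tie across its boundary, and otherwise both equal it.
*)

theory Submission
  imports Defs
begin

section \<open>Exponent vectors, orbits and layers\<close>

definition monomial :: "nat \<Rightarrow> (nat \<Rightarrow> 'a::comm_monoid_mult) \<Rightarrow> (nat \<Rightarrow> nat) \<Rightarrow> 'a" where
  "monomial n x e = (\<Prod>j<n. x j ^ e j)"

definition sorted_exps :: "nat \<Rightarrow> (nat \<Rightarrow> nat) \<Rightarrow> nat list" where
  "sorted_exps n d = rev (sort (map d [0..<n]))"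

definition sorted_exp :: "nat \<Rightarrow> (nat \<Rightarrow> nat) \<Rightarrow> nat \<Rightarrow> nat" where
  "sorted_exp n d q = (if q < n then sorted_exps n d ! q else 0)"

text \<open>For the decreasingly sorted exponents, padded by \<open>sorted_exp n d n = 0\<close>, the gap at \<open>k\<close>
  is the exponent of \<open>e\<^sub>k\<^sub>+\<^sub>1\<close> in the orbit sum of \<open>x\<^sup>d\<close>.\<close>

definition exp_gap :: "nat \<Rightarrow> (nat \<Rightarrow> nat) \<Rightarrow> nat \<Rightarrow> nat" where
  "exp_gap n d k = sorted_exp n d k - sorted_exp n d (Suc k)"

definition orbit :: "nat \<Rightarrow> (nat \<Rightarrow> nat) \<Rightarrow> (nat \<Rightarrow> nat) set" where
  "orbit n d = (\<lambda>\<sigma>. d \<circ> \<sigma>) ` {\<sigma>. \<sigma> permutes {..<n}}"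

definition arrange :: "nat \<Rightarrow> (nat \<Rightarrow> nat) \<Rightarrow> (nat \<Rightarrow> nat) \<Rightarrow> nat \<Rightarrow> nat" where
  "arrange n d \<rho> l = (if l < n then sorted_exp n d (\<rho> l) else d l)"

definition layer :: "nat \<Rightarrow> (nat \<Rightarrow> nat) \<Rightarrow> nat \<Rightarrow> nat set" where
  "layer n \<rho> k = {l. l < n \<and> \<rho> l \<le> k}"

lemma permutes_less: "\<rho> permutes {..<n} \<Longrightarrow> l < n \<Longrightarrow> \<rho> l < (n::nat)"
  by (metis lessThan_iff permutes_in_image)

lemma sorted_exp_antimono: "q \<le> q' \<Longrightarrow> sorted_exp n d q' \<le> sorted_exp n d q"
  unfolding sorted_exp_def sorted_exps_def by (auto intro: sorted_rev_nth_mono)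

lemma sorted_exp_eq_sum_gaps: "sorted_exp n d q = (\<Sum>k\<in>{q..<n}. exp_gap n d k)"
proof (induction "n - q" arbitrary: q)
  case 0
  thus ?case by (simp add: sorted_exp_def)
next
  case (Suc m)
  hence "q < n" and "Suc m = n - q" by auto
  hence "(\<Sum>k\<in>{q..<n}. exp_gap n d k) = exp_gap n d q + (\<Sum>k\<in>{Suc q..<n}. exp_gap n d k)"
    by (simp add: sum.atLeast_Suc_lessThan)
  also have "\<dots> = sorted_exp n d q"
    using Suc sorted_exp_antimono[of q "Suc q" n d] by (simp add: exp_gap_def)
  finally show ?case ..
qed

lemma mset_map_eq_imp_permutes:
  assumes "mset (map e [0..<n]) = mset (map d [0..<n])"
  obtains \<sigma> where "\<sigma> permutes {..<n}" "\<And>l. l < n \<Longrightarrow> e l = d (\<sigma> l)"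
proof -
  obtain \<sigma> where \<sigma>: "\<sigma> permutes {..<length (map d [0..<n])}"
    "permute_list \<sigma> (map d [0..<n]) = map e [0..<n]"
    using mset_eq_permutation[OF assms] by blast
  have "e l = d (\<sigma> l)" if "l < n" for l
    using arg_cong[OF \<sigma>(2), of "\<lambda>xs. xs ! l"] \<sigma>(1) that by (simp add: permute_list_nth permutes_less)
  with \<sigma>(1) show thesis using that by simp
qed

lemma sorted_exps_eq_map: "sorted_exps n d = map (sorted_exp n d) [0..<n]"
  by (rule nth_equalityI) (simp_all add: sorted_exp_def sorted_exps_def)

lemma exists_permutes_sorted_exp:
  obtains p where "p permutes {..<n}" "\<And>l. l < n \<Longrightarrow> d l = sorted_exp n d (p l)"
proof -
  have "mset (map d [0..<n]) = mset (map (sorted_exp n d) [0..<n])"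
    by (simp flip: sorted_exps_eq_map add: sorted_exps_def)
  thus thesis by (rule mset_map_eq_imp_permutes[OF _ that])
qed

lemma map_comp_permutes:
  "\<sigma> permutes {..<n} \<Longrightarrow> map (d \<circ> \<sigma>) [0..<n] = permute_list \<sigma> (map d [0..<n])"
  by (rule nth_equalityI) (simp_all add: permute_list_nth permutes_less)

lemma sorted_exps_comp_permutes:
  assumes "\<sigma> permutes {..<n}"
  shows "sorted_exps n (d \<circ> \<sigma>) = sorted_exps n d"
proof -
  have "mset (map (d \<circ> \<sigma>) [0..<n]) = mset (map d [0..<n])"
    using assms by (simp add: map_comp_permutes)
  thus ?thesis
    unfolding sorted_exps_def by (metis sorted_list_of_multiset_mset)
qed

lemma sorted_exps_eq_imp_permutes:
  assumes "sorted_exps n e = sorted_exps n d"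
  obtains \<sigma> where "\<sigma> permutes {..<n}" "\<And>l. l < n \<Longrightarrow> e l = d (\<sigma> l)"
  using mset_map_eq_imp_permutes assms unfolding sorted_exps_def by (metis mset_sort rev_is_rev_conv)

lemma sorted_exps_eqI_gaps:
  assumes "\<And>k. k < n \<Longrightarrow> exp_gap n e k = exp_gap n d k"
  shows "sorted_exps n e = sorted_exps n d"
proof (rule nth_equalityI)
  fix q assume "q < length (sorted_exps n e)"
  hence "q < n" by (simp add: sorted_exps_def)
  thus "sorted_exps n e ! q = sorted_exps n d ! q"
    using sorted_exp_eq_sum_gaps[of n e q] sorted_exp_eq_sum_gaps[of n d q] assms
    by (simp add: sorted_exp_def)
qed (simp add: sorted_exps_def)

lemma mem_orbit_iff:
  "e \<in> orbit n d \<longleftrightarrow> (\<forall>l. n \<le> l \<longrightarrow> e l = d l) \<and> (\<forall>k<n. exp_gap n e k = exp_gap n d k)"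
proof
  assume "e \<in> orbit n d"
  then obtain \<sigma> where "\<sigma> permutes {..<n}" "e = d \<circ> \<sigma>" unfolding orbit_def by blast
  thus "(\<forall>l. n \<le> l \<longrightarrow> e l = d l) \<and> (\<forall>k<n. exp_gap n e k = exp_gap n d k)"
    by (simp add: permutes_not_in exp_gap_def sorted_exp_def sorted_exps_comp_permutes)
next
  assume e: "(\<forall>l. n \<le> l \<longrightarrow> e l = d l) \<and> (\<forall>k<n. exp_gap n e k = exp_gap n d k)"
  then obtain \<sigma> where \<sigma>: "\<sigma> permutes {..<n}" "\<And>l. l < n \<Longrightarrow> e l = d (\<sigma> l)"
    using sorted_exps_eq_imp_permutes sorted_exps_eqI_gaps by metis
  have "e = d \<circ> \<sigma>"
  proof
    fix l show "e l = (d \<circ> \<sigma>) l"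
      using e \<sigma> permutes_not_in[OF \<sigma>(1)] by (cases "l < n") auto
  qed
  with \<sigma>(1) show "e \<in> orbit n d" unfolding orbit_def by blast
qed

lemma finite_orbit: "finite (orbit n d)"
  unfolding orbit_def by (simp add: finite_permutations)

lemma orbit_eq_arrange_image: "orbit n d = arrange n d ` {\<rho>. \<rho> permutes {..<n}}"
proof -
  obtain p where p: "p permutes {..<n}" "\<And>l. l < n \<Longrightarrow> d l = sorted_exp n d (p l)"
    using exists_permutes_sorted_exp[of n d] by blast
  have to_arrange: "d \<circ> \<sigma> = arrange n d (p \<circ> \<sigma>)" if "\<sigma> permutes {..<n}" for \<sigma>
    using that p permutes_not_in[OF that] by (auto simp: arrange_def permutes_less)
  have from_arrange: "arrange n d \<rho> = d \<circ> (inv p \<circ> \<rho>)" if \<rho>: "\<rho> permutes {..<n}" for \<rho>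
  proof
    fix l show "arrange n d \<rho> l = (d \<circ> (inv p \<circ> \<rho>)) l"
    proof (cases "l < n")
      case True
      hence "inv p (\<rho> l) < n" using permutes_less[OF permutes_inv[OF p(1)]] permutes_less[OF \<rho>] by blast
      thus ?thesis using True p(2) permutes_inverses(1)[OF p(1)] by (simp add: arrange_def)
    next
      case False
      thus ?thesis using permutes_not_in[OF \<rho>] permutes_not_in[OF permutes_inv[OF p(1)]]
        by (simp add: arrange_def)
    qed
  qed
  show ?thesis
    unfolding orbit_def
  proof (intro equalityI subsetI)
    fix e assume "e \<in> (\<lambda>\<sigma>. d \<circ> \<sigma>) ` {\<sigma>. \<sigma> permutes {..<n}}"
    then obtain \<sigma> where "\<sigma> permutes {..<n}" "e = d \<circ> \<sigma>" by blast
    thus "e \<in> arrange n d ` {\<rho>. \<rho> permutes {..<n}}"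
      using to_arrange permutes_compose[OF _ p(1)] by blast
  next
    fix e assume "e \<in> arrange n d ` {\<rho>. \<rho> permutes {..<n}}"
    then obtain \<rho> where "\<rho> permutes {..<n}" "e = arrange n d \<rho>" by blast
    thus "e \<in> (\<lambda>\<sigma>. d \<circ> \<sigma>) ` {\<sigma>. \<sigma> permutes {..<n}}"
      using from_arrange permutes_compose[OF _ permutes_inv[OF p(1)]] by blast
  qed
qed

lemma arrange_mem_orbit: "\<rho> permutes {..<n} \<Longrightarrow> arrange n d \<rho> \<in> orbit n d"
  by (simp add: orbit_eq_arrange_image)

lemma card_layer:
  assumes "\<rho> permutes {..<n}" "k < n"
  shows "card (layer n \<rho> k) = Suc k"
proof -
  have "bij_betw \<rho> (layer n \<rho> k) {..k}"
  proof (rule bij_betw_imageI)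
    show "inj_on \<rho> (layer n \<rho> k)"
      using permutes_inj[OF assms(1)] by (rule inj_on_subset) simp
    show "\<rho> ` layer n \<rho> k = {..k}"
      using assms permutes_inverses[OF assms(1)] permutes_less[OF permutes_inv[OF assms(1)]]
      by (auto simp: layer_def image_iff) (metis dual_order.strict_trans2)
  qed
  thus ?thesis by (simp add: bij_betw_same_card)
qed

lemma layer_subset: "layer n \<rho> k \<subseteq> {..<n}"
  by (auto simp: layer_def)

lemma finite_layer: "finite (layer n \<rho> k)"
  using finite_subset[OF layer_subset] by blast

lemma finite_subsets_card: "finite {S. S \<subseteq> {..<n::nat} \<and> card S = m}"
  by (rule finite_subset[of _ "Pow {..<n}"]) auto

lemma arrange_eq_sum_gaps:
  assumes "l < n"
  shows "arrange n d \<rho> l = (\<Sum>k<n. if l \<in> layer n \<rho> k then exp_gap n d k else 0)"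
proof -
  have "{\<rho> l..<n} = {k \<in> {..<n}. \<rho> l \<le> k}" by auto
  hence "sorted_exp n d (\<rho> l) = (\<Sum>k<n. if \<rho> l \<le> k then exp_gap n d k else 0)"
    by (simp only: sorted_exp_eq_sum_gaps sum.inter_filter[OF finite_lessThan])
  thus ?thesis using assms by (simp add: arrange_def layer_def)
qed

lemma layer_eq_threshold:
  assumes "0 < exp_gap n d k"
  shows "layer n \<rho> k = {l. l < n \<and> sorted_exp n d k \<le> arrange n d \<rho> l}"
proof -
  have "\<rho> l \<le> k \<longleftrightarrow> sorted_exp n d k \<le> sorted_exp n d (\<rho> l)" for l
    using assms sorted_exp_antimono[of "\<rho> l" k n d] sorted_exp_antimono[of "Suc k" "\<rho> l" n d]
    by (cases "\<rho> l \<le> k") (auto simp: exp_gap_def)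
  thus ?thesis by (auto simp: layer_def arrange_def)
qed

lemma arrange_eq_iff_layers:
  "arrange n d \<rho> = arrange n d \<rho>' \<longleftrightarrow> (\<forall>k. 0 < exp_gap n d k \<longrightarrow> layer n \<rho> k = layer n \<rho>' k)"
proof
  assume "arrange n d \<rho> = arrange n d \<rho>'"
  thus "\<forall>k. 0 < exp_gap n d k \<longrightarrow> layer n \<rho> k = layer n \<rho>' k"
    by (simp add: layer_eq_threshold)
next
  assume layers: "\<forall>k. 0 < exp_gap n d k \<longrightarrow> layer n \<rho> k = layer n \<rho>' k"
  show "arrange n d \<rho> = arrange n d \<rho>'"
  proof
    fix l show "arrange n d \<rho> l = arrange n d \<rho>' l"
    proof (cases "l < n")
      case True
      have "(if l \<in> layer n \<rho> k then exp_gap n d k else 0) =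
            (if l \<in> layer n \<rho>' k then exp_gap n d k else 0)" for k
        using layers by (cases "exp_gap n d k") auto
      thus ?thesis using True by (simp add: arrange_eq_sum_gaps)
    qed (simp add: arrange_def)
  qed
qed

lemma prod_power_distrib_monoid: "prod f A ^ c = (\<Prod>a\<in>A. f a ^ c)"
  for f :: "'b \<Rightarrow> 'a::comm_monoid_mult"
  by (induct A rule: infinite_finite_induct) (auto simp: power_mult_distrib)

lemma monomial_arrange:
  "monomial n x (arrange n d \<rho>) = (\<Prod>k<n. prod x (layer n \<rho> k) ^ exp_gap n d k)"
proof -
  have "monomial n x (arrange n d \<rho>) =
        (\<Prod>l<n. \<Prod>k<n. if l \<in> layer n \<rho> k then x l ^ exp_gap n d k else 1)"
    unfolding monomial_def
  proof (intro prod.cong refl)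
    fix l assume "l \<in> {..<n}"
    have "x l ^ (if c then g else 0) = (if c then x l ^ g else 1)" for c g by simp
    thus "x l ^ arrange n d \<rho> l =
          (\<Prod>k<n. if l \<in> layer n \<rho> k then x l ^ exp_gap n d k else 1)"
      using \<open>l \<in> {..<n}\<close> by (simp add: arrange_eq_sum_gaps power_sum)
  qed
  also have "\<dots> = (\<Prod>k<n. \<Prod>l<n. if l \<in> layer n \<rho> k then x l ^ exp_gap n d k else 1)"
    by (rule prod.swap)
  also have "\<dots> = (\<Prod>k<n. prod x (layer n \<rho> k) ^ exp_gap n d k)"
    by (simp add: prod.inter_restrict[symmetric] Int_absorb1[OF layer_subset] prod_power_distrib_monoid)
  finally show ?thesis .
qed

lemma monomial_comp_arrange:
  assumes "\<tau> permutes {..<n}"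
  shows "monomial n (x \<circ> \<tau>) (arrange n d (\<rho> \<circ> \<tau>)) = monomial n x (arrange n d \<rho>)"
proof -
  have "monomial n (x \<circ> \<tau>) (arrange n d (\<rho> \<circ> \<tau>)) = (\<Prod>l<n. (\<lambda>m. x m ^ arrange n d \<rho> m) (\<tau> l))"
    unfolding monomial_def using assms by (intro prod.cong) (simp_all add: arrange_def permutes_less)
  also have "\<dots> = monomial n x (arrange n d \<rho>)"
    unfolding monomial_def using assms by (intro prod.reindex_bij_betw) (rule permutes_imp_bij)
  finally show ?thesis .
qed

lemma exp_gap_pos_imp_less: "0 < exp_gap n d k \<Longrightarrow> k < n"
  by (rule ccontr) (simp add: exp_gap_def sorted_exp_def)

section \<open>Symmetric expressions as sums of orbit sums\<close>

text \<open>The gaps determine the orbit only together with the exponents of the variables beyond \<open>n\<close>;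
  these do not occur in \<open>poly_eval _ n\<close>, but distinct orbits must get distinct codes.\<close>

definition orbit_code :: "nat \<Rightarrow> 'a \<times> (nat \<Rightarrow> nat) \<Rightarrow> 'a \<times> (nat \<Rightarrow> nat)" where
  "orbit_code n = (\<lambda>(a, d). (a, \<lambda>j. if j < n then exp_gap n d j else d j))"

lemma orbit_code_eq_iff: "orbit_code n (b, e) = orbit_code n (a, d) \<longleftrightarrow> b = a \<and> e \<in> orbit n d"
proof -
  have "(\<lambda>j. if j < n then exp_gap n e j else e j) = (\<lambda>j. if j < n then exp_gap n d j else d j)
        \<longleftrightarrow> e \<in> orbit n d"
    unfolding mem_orbit_iff fun_eq_iff by (auto simp: not_less[symmetric])
  thus ?thesis by (simp add: orbit_code_def)
qed

lemma orbit_code_fiber: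
  assumes "symmetric_expr n P" "(a, d) \<in> P"
  shows "{q \<in> P. orbit_code n q = orbit_code n (a, d)} = Pair a ` orbit n d"
proof (intro equalityI subsetI)
  fix q assume "q \<in> {q \<in> P. orbit_code n q = orbit_code n (a, d)}"
  thus "q \<in> Pair a ` orbit n d" by (cases q) (auto simp: orbit_code_eq_iff)
next
  fix q assume "q \<in> Pair a ` orbit n d"
  then obtain \<sigma> where "\<sigma> permutes {..<n}" "q = (a, d \<circ> \<sigma>)" unfolding orbit_def by auto
  thus "q \<in> {q \<in> P. orbit_code n q = orbit_code n (a, d)}"
    using assms unfolding symmetric_expr_def by (auto simp: orbit_code_eq_iff orbit_def)
qed

lemma poly_eval_symmetric_eq:
  fixes x y :: "nat \<Rightarrow> 'a::{comm_semiring_0, comm_monoid_mult}"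
  assumes P: "symmetric_expr n P"
    and orbit_sum: "\<And>d. (\<Sum>e\<in>orbit n d. monomial n x e) = monomial n y (exp_gap n d)"
  shows "poly_eval P n x = poly_eval (orbit_code n ` P) n y"
proof -
  define f where "f = (\<lambda>(a, d). a * monomial n x d)"
  have "poly_eval P n x = sum f P" by (simp add: poly_eval_def f_def monomial_def)
  also have "\<dots> = (\<Sum>r\<in>orbit_code n ` P. sum f {q \<in> P. orbit_code n q = r})"
    using P by (intro sum.image_gen) (simp add: symmetric_expr_def)
  also have "\<dots> = poly_eval (orbit_code n ` P) n y"
    unfolding poly_eval_def
  proof (rule sum.cong[OF refl])
    fix r assume "r \<in> orbit_code n ` P"
    then obtain a d where ad: "(a, d) \<in> P" "r = orbit_code n (a, d)" by auto
    have "sum f {q \<in> P. orbit_code n q = r} = (\<Sum>e\<in>orbit n d. a * monomial n x e)"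
      using orbit_code_fiber[OF P ad(1)] ad(2) by (simp add: sum.reindex inj_on_def f_def)
    also have "\<dots> = a * monomial n y (exp_gap n d)" by (simp add: orbit_sum flip: sum_distrib_left)
    also have "\<dots> = (case r of (a, c) \<Rightarrow> a * (\<Prod>j<n. y j ^ c j))"
      using ad(2) by (simp add: orbit_code_def monomial_def)
    finally show "sum f {q \<in> P. orbit_code n q = r} = (case r of (a, c) \<Rightarrow> a * (\<Prod>j<n. y j ^ c j))" .
  qed
  finally show ?thesis .
qed

lemma exists_ranking:
  fixes R :: "nat \<Rightarrow> nat \<Rightarrow> bool"
  assumes total: "\<And>i j. R i j \<or> R j i" and trans: "\<And>i j k. R i j \<Longrightarrow> R j k \<Longrightarrow> R i k"
  obtains r where "r permutes {..<n}" "\<And>i j. i < n \<Longrightarrow> j < n \<Longrightarrow> r i < r j \<Longrightarrow> R i j"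
proof -
  define lt where "lt i j \<longleftrightarrow> R i j \<and> (\<not> R j i \<or> i < j)" for i j
  have lt_irrefl: "\<not> lt i i" for i unfolding lt_def by auto
  have lt_trans: "lt i k" if "lt i j" "lt j k" for i j k
    using that trans unfolding lt_def by (metis order.strict_trans)
  have lt_total: "lt i j \<or> lt j i" if "i \<noteq> j" for i j
    using that total unfolding lt_def by (metis linorder_neqE_nat)
  define r where "r i = (if i < n then card {j. j < n \<and> lt j i} else i)" for i
  have r_mono: "r i < r j" if "i < n" "j < n" "lt i j" for i j
  proof -
    have "{l. l < n \<and> lt l i} \<subset> {l. l < n \<and> lt l j}"
      using that lt_trans lt_irrefl by blast
    thus ?thesis using that by (simp add: r_def psubset_card_mono)
  qed
  have r_less: "r i < n" if "i < n" for i
  proof -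
    have "{l. l < n \<and> lt l i} \<subseteq> {..<n} - {i}" using lt_irrefl by auto
    hence "card {l. l < n \<and> lt l i} < n"
      using that by (metis card_Diff1_less card_lessThan finite_lessThan lessThan_iff card_mono
          finite_Diff order.strict_trans1)
    thus ?thesis using that by (simp add: r_def)
  qed
  have "inj_on r {..<n}"
    by (rule inj_onI) (metis lessThan_iff less_irrefl lt_total r_mono)
  moreover have "r ` {..<n} = {..<n}"
    using calculation r_less by (intro endo_inj_surj) auto
  ultimately have "bij_betw r {..<n} {..<n}" by (simp add: bij_betw_def)
  hence "r permutes {..<n}" by (rule bij_imp_permutes) (simp add: r_def)
  moreover have "R i j" if "i < n" "j < n" "r i < r j" for i j
    using that lt_total r_mono unfolding lt_def by (metis less_asym less_irrefl)
  ultimately show thesis using that by blast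
qed

lemma prod_exchange:
  fixes x :: "'b \<Rightarrow> 'a::comm_monoid_mult"
  assumes "finite S" "finite T" "card S = card T"
  obtains f where "bij_betw f (S - T) (T - S)"
    "prod x T = prod x (S \<inter> T) * prod (x \<circ> f) (S - T)"
    "prod x S = prod x (S \<inter> T) * prod x (S - T)"
proof -
  have "card (S - T) = card (T - S)"
    using assms by (simp add: card_Diff_subset_Int Int_commute)
  then obtain f where f: "bij_betw f (S - T) (T - S)"
    using assms finite_same_card_bij by blast
  have "prod x T = prod x (T \<inter> S) * prod x (T - S)" using assms(2) by (rule prod.Int_Diff)
  also have "prod x (T - S) = prod (x \<circ> f) (S - T)"
    using prod.reindex_bij_betw[OF f, of x] by (simp add: comp_def)
  finally show thesis
    using that[OF f] prod.Int_Diff[OF assms(1), of x T] by (simp add: Int_commute)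
qed

section \<open>Ghosts, the nu-order and absorption\<close>

definition nu :: "'a::plus \<Rightarrow> 'a" where
  "nu a = a + a"

definition nu_ge :: "'a::plus \<Rightarrow> 'a \<Rightarrow> bool" where
  "nu_ge a b \<longleftrightarrow> nu a + nu b = nu a"

definition absorbs :: "'a::plus \<Rightarrow> 'a \<Rightarrow> bool" where
  "absorbs a b \<longleftrightarrow> a + b = a"

definition absorbs_or_eq :: "'a::plus \<Rightarrow> 'a \<Rightarrow> bool" where
  "absorbs_or_eq a b \<longleftrightarrow> a = b \<or> absorbs a b"

definition self_or_nu :: "'a::plus \<Rightarrow> 'a \<Rightarrow> bool" where
  "self_or_nu c a \<longleftrightarrow> c = a \<or> c = nu a"

lemma nu_add: "nu (a + b) = nu a + nu (b::'a::ab_semigroup_add)"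
  by (simp add: nu_def ac_simps)

lemma nu_mult_left: "nu (a * b) = nu a * (b::'a::semiring)"
  by (simp add: nu_def distrib_right)

lemma nu_mult_right: "nu (a * b) = a * nu (b::'a::semiring)"
  by (simp add: nu_def distrib_left)

lemma nu_prod_eq:
  fixes y z :: "'b \<Rightarrow> 'a::{comm_semiring_0, comm_monoid_mult}"
  assumes "\<And>s. s \<in> A \<Longrightarrow> nu (y s) = nu (z s)"
  shows "nu (prod y A) = nu (prod z A)"
  using assms
proof (induction A rule: infinite_finite_induct)
  case (insert s A)
  have "nu (y s * prod y A) = nu (y s) * prod y A" by (rule nu_mult_left)
  also have "\<dots> = z s * nu (prod y A)"
    using insert.prems[of s] by (simp only: insertI1 nu_mult_left[symmetric] nu_mult_right)
  also have "\<dots> = nu (z s * prod z A)" using insert by (simp add: nu_mult_right)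
  finally show ?case using insert by simp
qed simp_all

lemma nu_power_eq: "nu a = nu b \<Longrightarrow> nu (a ^ c) = nu (b ^ c :: 'a::{comm_semiring_0, comm_monoid_mult})"
  using nu_prod_eq[of "{..<c}" "\<lambda>_. a" "\<lambda>_. b"] by simp

lemma nu_ge_trans: "nu_ge a b \<Longrightarrow> nu_ge b c \<Longrightarrow> nu_ge a (c::'a::semigroup_add)"
  unfolding nu_ge_def by (metis add.assoc)

lemma nu_ge_mult_right: "nu_ge a b \<Longrightarrow> nu_ge (a * c) (b * (c::'a::semiring))"
  unfolding nu_ge_def by (simp add: nu_mult_left flip: distrib_right)

lemma nu_ge_mult:
  assumes "nu_ge a b" "nu_ge c d"
  shows "nu_ge (a * c) (b * (d::'a::comm_semiring))"
proof -
  have "nu_ge (a * c) (b * c)" by (rule nu_ge_mult_right[OF assms(1)])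
  moreover have "nu_ge (b * c) (b * d)" by (metis nu_ge_mult_right[OF assms(2)] mult.commute)
  ultimately show ?thesis by (rule nu_ge_trans)
qed

lemma absorbs_trans: "absorbs a b \<Longrightarrow> absorbs b c \<Longrightarrow> absorbs a (c::'a::semigroup_add)"
  unfolding absorbs_def by (metis add.assoc)

lemma absorbs_mult_right: "absorbs a b \<Longrightarrow> absorbs (a * c) (b * (c::'a::semiring))"
  unfolding absorbs_def by (simp flip: distrib_right)

lemma absorbs_or_eq_mult_right: "absorbs_or_eq a b \<Longrightarrow> absorbs_or_eq (a * c) (b * (c::'a::semiring))"
  unfolding absorbs_or_eq_def using absorbs_mult_right by blast

lemma absorbs_mult:
  assumes "absorbs a b" "absorbs_or_eq c d"
  shows "absorbs (a * c) (b * (d::'a::comm_semiring))"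
proof -
  have "absorbs (a * c) (b * c)" using assms(1) by (rule absorbs_mult_right)
  moreover have "absorbs_or_eq (b * c) (b * d)"
    using absorbs_or_eq_mult_right[OF assms(2)] by (simp add: mult.commute)
  ultimately show ?thesis unfolding absorbs_or_eq_def using absorbs_trans by metis
qed

lemma absorbs_or_eq_mult:
  "absorbs_or_eq a b \<Longrightarrow> absorbs_or_eq c d \<Longrightarrow> absorbs_or_eq (a * c) (b * (d::'a::comm_semiring))"
  using absorbs_mult[of a b c d] absorbs_mult[of c d a a]
  by (auto simp: absorbs_or_eq_def mult.commute)

lemma absorbs_or_eq_prod:
  fixes y z :: "'b \<Rightarrow> 'a::{comm_semiring_0, comm_monoid_mult}"
  shows "(\<And>s. s \<in> A \<Longrightarrow> absorbs_or_eq (y s) (z s)) \<Longrightarrow> absorbs_or_eq (prod y A) (prod z A)"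
proof (induction A rule: infinite_finite_induct)
  case (insert s A)
  thus ?case by (simp add: absorbs_or_eq_mult)
qed (simp_all add: absorbs_or_eq_def)

lemma absorbs_prod:
  fixes y z :: "'b \<Rightarrow> 'a::{comm_semiring_0, comm_monoid_mult}"
  assumes "finite A" "s0 \<in> A" "absorbs (y s0) (z s0)" "\<And>s. s \<in> A \<Longrightarrow> absorbs_or_eq (y s) (z s)"
  shows "absorbs (prod y A) (prod z A)"
proof -
  have "absorbs (y s0 * prod y (A - {s0})) (z s0 * prod z (A - {s0}))"
    using assms by (intro absorbs_mult absorbs_or_eq_prod) auto
  thus ?thesis using assms by (simp add: prod.remove)
qed

lemma absorbs_power: "absorbs a b \<Longrightarrow> 0 < c \<Longrightarrow> absorbs (a ^ c) (b ^ (c::nat))"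
  for a b :: "'a::{comm_semiring_0, comm_monoid_mult}"
  using absorbs_prod[of "{..<c}" 0 "\<lambda>_. a" "\<lambda>_. b"] by (simp add: absorbs_or_eq_def)

lemma sum_absorbed:
  fixes t :: "'b \<Rightarrow> 'a::comm_monoid_add"
  shows "(\<And>i. i \<in> I \<Longrightarrow> absorbs u (t i)) \<Longrightarrow> absorbs u (sum t I)"
proof (induction I rule: infinite_finite_induct)
  case (insert i I)
  thus ?case unfolding absorbs_def by (metis add.assoc insertCI sum.insert)
qed (simp_all add: absorbs_def)

lemma sum_eq_top_if_absorbs:
  fixes t :: "'b \<Rightarrow> 'a::comm_monoid_add"
  assumes "finite I" "i0 \<in> I" "\<And>i. i \<in> I - {i0} \<Longrightarrow> absorbs (t i0) (t i)"
  shows "sum t I = t i0"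
  using sum_absorbed[of "I - {i0}" "t i0" t] assms by (simp add: absorbs_def sum.remove)

lemma nu_comp_transpose:
  "nu (x i) = nu (x j) \<Longrightarrow> nu ((x \<circ> transpose i j) l) = nu (x l)"
  by (cases "l = i"; cases "l = j") auto

lemma nu_monomial_eq:
  fixes x y :: "nat \<Rightarrow> 'a::{comm_semiring_0, comm_monoid_mult}"
  shows "(\<And>l. l < n \<Longrightarrow> nu (x l) = nu (y l)) \<Longrightarrow> nu (monomial n x e) = nu (monomial n y e)"
  unfolding monomial_def by (intro nu_prod_eq nu_power_eq) simp

text \<open>A nu-tie across the boundary of the \<open>k\<close>-th layer: exactly what turns the dominant terms
  of both \<open>e\<^sub>k\<^sub>+\<^sub>1\<close> and the orbit sum into ghosts.\<close>

definition layer_tied :: "nat \<Rightarrow> (nat \<Rightarrow> 'a::plus) \<Rightarrow> (nat \<Rightarrow> nat) \<Rightarrow> nat \<Rightarrow> bool" where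
  "layer_tied n x r k \<longleftrightarrow> (\<exists>i \<in> layer n r k. \<exists>j<n. j \<notin> layer n r k \<and> nu (x i) = nu (x j))"

definition nu_ranking :: "nat \<Rightarrow> (nat \<Rightarrow> 'a::plus) \<Rightarrow> (nat \<Rightarrow> nat) \<Rightarrow> bool" where
  "nu_ranking n x r \<longleftrightarrow> r permutes {..<n} \<and> (\<forall>i<n. \<forall>j<n. r i < r j \<longrightarrow> nu_ge (x i) (x j))"

section \<open>Supertropical semirings\<close>

context
  assumes supertropical: "supertropical TYPE('a::{comm_semiring_0, comm_monoid_mult})"
begin

lemma nu_nu: "nu (nu a) = nu (a::'a)"
proof -
  have two_eq_four: "(1::'a) + 1 = 1 + 1 + 1 + 1"
    using supertropical unfolding supertropical_def by blast
  have "nu (nu a) = a * (1 + 1 + 1 + 1)"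
    by (simp only: nu_def distrib_left mult_1_right add.assoc)
  also have "\<dots> = a * (1 + 1)"
    by (rule arg_cong[OF two_eq_four[symmetric]])
  also have "\<dots> = nu a"
    by (simp only: nu_def distrib_left mult_1_right)
  finally show ?thesis .
qed

lemma add_eq_nu: "nu a = nu b \<Longrightarrow> a + b = nu (a::'a)"
  using supertropical unfolding supertropical_def nu_def by blast

lemma add_cases: "nu a \<noteq> nu b \<Longrightarrow> a + b = a \<or> a + b = (b::'a)"
  using supertropical unfolding supertropical_def nu_def by blast

lemma nu_mult_nu: "nu a * nu b = nu (a * b :: 'a)"
  by (metis nu_mult_left nu_mult_right nu_nu)

lemma nu_power: "0 < c \<Longrightarrow> nu a ^ c = nu (a ^ c :: 'a)"
proof (induction c)
  case (Suc c)
  thus ?case by (cases c) (simp_all add: nu_mult_nu)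
qed simp

lemma nu_ge_refl: "nu_ge a (a::'a)"
  unfolding nu_ge_def by (metis nu_def nu_nu)

lemma nu_ge_total: "nu_ge a b \<or> nu_ge b (a::'a)"
proof (cases "nu a = nu b")
  case True
  thus ?thesis using nu_ge_refl[of a] by (simp add: nu_ge_def)
next
  case False
  hence "nu (nu a) \<noteq> nu (nu b)" by (simp add: nu_nu)
  thus ?thesis using add_cases unfolding nu_ge_def by (metis add.commute)
qed

lemma nu_ge_imp_absorbs: "nu_ge a b \<Longrightarrow> nu a \<noteq> nu b \<Longrightarrow> absorbs a (b::'a)"
  unfolding nu_ge_def absorbs_def by (metis add_cases nu_add)

lemma nu_absorbs: "nu_ge a b \<Longrightarrow> absorbs (nu a) (b::'a)"
proof (cases "nu b = nu a")
  case True
  thus ?thesis using add_eq_nu[of "nu a" b] by (simp add: absorbs_def nu_nu)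
next
  case False
  assume "nu_ge a b"
  hence "nu_ge (nu a) b" by (simp add: nu_ge_def nu_nu)
  thus ?thesis using False by (intro nu_ge_imp_absorbs) (simp_all add: nu_nu)
qed

lemma nu_ge_prod:
  fixes y z :: "'b \<Rightarrow> 'a"
  shows "(\<And>s. s \<in> A \<Longrightarrow> nu_ge (y s) (z s)) \<Longrightarrow> nu_ge (prod y A) (prod z A)"
proof (induction A rule: infinite_finite_induct)
  case (insert s A)
  thus ?case by (simp add: nu_ge_mult)
qed (simp_all add: nu_ge_refl)

lemma nu_ge_power: "nu_ge a b \<Longrightarrow> nu_ge (a ^ c) (b ^ c :: 'a)"
  using nu_ge_prod[of "{..<c}" "\<lambda>_. a" "\<lambda>_. b"] by simp

lemma self_or_nu_mult: "self_or_nu c a \<Longrightarrow> self_or_nu d b \<Longrightarrow> self_or_nu (c * d) (a * b :: 'a)"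
  unfolding self_or_nu_def
  by (elim disjE) (simp_all add: nu_mult_nu nu_nu flip: nu_mult_left nu_mult_right)

lemma self_or_nu_prod:
  fixes y z :: "'b \<Rightarrow> 'a"
  shows "(\<And>s. s \<in> A \<Longrightarrow> self_or_nu (y s) (z s)) \<Longrightarrow> self_or_nu (prod y A) (prod z A)"
proof (induction A rule: infinite_finite_induct)
  case (insert s A)
  thus ?case by (simp add: self_or_nu_mult)
qed (simp_all add: self_or_nu_def)

lemma self_or_nu_power: "self_or_nu c a \<Longrightarrow> self_or_nu (c ^ m) (a ^ m :: 'a)"
  using self_or_nu_prod[of "{..<m}" "\<lambda>_. c" "\<lambda>_. a"] by simp

lemma nu_mult_self_or_nu: "self_or_nu c b \<Longrightarrow> nu a * c = nu (a * b :: 'a)"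
  unfolding self_or_nu_def by (auto simp: nu_mult_left nu_mult_nu)

lemma prod_power_eq_nu:
  fixes F g :: "'b \<Rightarrow> 'a"
  assumes "finite A" "k \<in> A" "\<And>l. l \<in> A \<Longrightarrow> self_or_nu (F l) (g l)" "F k = nu (g k)" "0 < c k"
  shows "(\<Prod>l\<in>A. F l ^ c l) = nu (\<Prod>l\<in>A. g l ^ c l)"
proof -
  have rest: "self_or_nu (\<Prod>l\<in>A - {k}. F l ^ c l) (\<Prod>l\<in>A - {k}. g l ^ c l)"
    using assms(3) by (intro self_or_nu_prod self_or_nu_power) simp
  have "(\<Prod>l\<in>A. F l ^ c l) = nu (g k ^ c k) * (\<Prod>l\<in>A - {k}. F l ^ c l)"
    using assms by (simp add: prod.remove nu_power)
  also have "\<dots> = nu (\<Prod>l\<in>A. g l ^ c l)"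
    using assms by (simp add: nu_mult_self_or_nu[OF rest] prod.remove)
  finally show ?thesis .
qed

lemma sum_eq_nu_top:
  fixes t :: "'b \<Rightarrow> 'a"
  assumes "finite I" "i0 \<in> I" "\<And>i. i \<in> I \<Longrightarrow> nu_ge (t i0) (t i)"
    and "i1 \<in> I" "i1 \<noteq> i0" "nu (t i1) = nu (t i0)"
  shows "sum t I = nu (t i0)"
proof -
  have "sum t I = (t i0 + t i1) + sum t (I - {i0} - {i1})"
    using assms by (simp add: sum.remove add.assoc)
  also have "t i0 + t i1 = nu (t i0)" using add_eq_nu assms(6) by metis
  also have "nu (t i0) + sum t (I - {i0} - {i1}) = nu (t i0)"
    using sum_absorbed[of "I - {i0} - {i1}" "nu (t i0)" t] assms(3) nu_absorbs
    by (simp add: absorbs_def)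
  finally show ?thesis .
qed

lemma sum_self_or_nu_top:
  fixes t :: "'b \<Rightarrow> 'a"
  assumes "finite I" "i0 \<in> I" "\<And>i. i \<in> I \<Longrightarrow> nu_ge (t i0) (t i)"
  shows "self_or_nu (sum t I) (t i0)"
proof (cases "\<exists>i1 \<in> I - {i0}. nu (t i1) = nu (t i0)")
  case True
  thus ?thesis using sum_eq_nu_top[of I i0 t] assms by (auto simp: self_or_nu_def)
next
  case False
  hence "sum t I = t i0"
    using assms nu_ge_imp_absorbs by (intro sum_eq_top_if_absorbs) (auto simp: eq_commute)
  thus ?thesis by (simp add: self_or_nu_def)
qed

section \<open>Orbit sums over a supertropical semiring\<close>

lemma exists_nu_ranking:
  fixes x :: "nat \<Rightarrow> 'a"
  obtains r where "nu_ranking n x r"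
proof (rule exists_ranking[of "\<lambda>i j. nu_ge (x i) (x j)" n])
  show "nu_ge (x i) (x j) \<or> nu_ge (x j) (x i)" for i j by (rule nu_ge_total)
  show "nu_ge (x i) (x k)" if "nu_ge (x i) (x j)" "nu_ge (x j) (x k)" for i j k
    using that by (rule nu_ge_trans)
qed (auto simp: nu_ranking_def intro: that)

context
  fixes n :: nat and x :: "nat \<Rightarrow> 'a" and r :: "nat \<Rightarrow> nat"
  assumes ranking: "nu_ranking n x r"
begin

lemma ranking_permutes: "r permutes {..<n}"
  using ranking by (simp add: nu_ranking_def)

lemma ranking_nu_ge: "i < n \<Longrightarrow> j < n \<Longrightarrow> r i < r j \<Longrightarrow> nu_ge (x i) (x j)"
  using ranking by (simp add: nu_ranking_def)

lemma layer_exchange: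
  assumes "k < n" "S \<subseteq> {..<n}" "card S = Suc k"
  obtains f where "bij_betw f (S - layer n r k) (layer n r k - S)"
    "prod x (layer n r k) = prod x (S \<inter> layer n r k) * prod (x \<circ> f) (S - layer n r k)"
    "prod x S = prod x (S \<inter> layer n r k) * prod x (S - layer n r k)"
    "\<And>s. s \<in> S - layer n r k \<Longrightarrow> nu_ge (x (f s)) (x s)"
proof -
  have "finite S" using assms(2) finite_subset by blast
  then obtain f where f: "bij_betw f (S - layer n r k) (layer n r k - S)"
    "prod x (layer n r k) = prod x (S \<inter> layer n r k) * prod (x \<circ> f) (S - layer n r k)"
    "prod x S = prod x (S \<inter> layer n r k) * prod x (S - layer n r k)"
    using prod_exchange[of S "layer n r k" x] card_layer[OF ranking_permutes assms(1)] assms(3)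
    by (metis finite_lessThan finite_subset layer_subset)
  have "nu_ge (x (f s)) (x s)" if "s \<in> S - layer n r k" for s
  proof -
    have "f s \<in> layer n r k" using f(1) that by (auto dest: bij_betwE)
    thus ?thesis using that assms(2) by (intro ranking_nu_ge) (auto simp: layer_def)
  qed
  with f show thesis using that by blast
qed

lemma layer_prod_nu_ge:
  assumes "k < n" "S \<subseteq> {..<n}" "card S = Suc k"
  shows "nu_ge (prod x (layer n r k)) (prod x S)"
proof -
  obtain f where "prod x (layer n r k) = prod x (S \<inter> layer n r k) * prod (x \<circ> f) (S - layer n r k)"
    "prod x S = prod x (S \<inter> layer n r k) * prod x (S - layer n r k)"
    "\<And>s. s \<in> S - layer n r k \<Longrightarrow> nu_ge (x (f s)) (x s)"
    using layer_exchange[OF assms] by blast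
  thus ?thesis unfolding comp_def by (simp only:) (intro nu_ge_mult nu_ge_refl nu_ge_prod, auto)
qed

lemma layer_prod_absorbs:
  assumes "k < n" "S \<subseteq> {..<n}" "card S = Suc k" "\<not> layer_tied n x r k" "S \<noteq> layer n r k"
  shows "absorbs (prod x (layer n r k)) (prod x S)"
proof -
  obtain f where f: "bij_betw f (S - layer n r k) (layer n r k - S)"
    and T: "prod x (layer n r k) = prod x (S \<inter> layer n r k) * prod (x \<circ> f) (S - layer n r k)"
    and S: "prod x S = prod x (S \<inter> layer n r k) * prod x (S - layer n r k)"
    and ranked: "\<And>s. s \<in> S - layer n r k \<Longrightarrow> nu_ge (x (f s)) (x s)"
    using layer_exchange[OF assms(1-3)] by blast
  have "S - layer n r k \<noteq> {}"
  proof
    assume "S - layer n r k = {}"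
    hence "S \<subseteq> layer n r k" by blast
    thus False
      using card_subset_eq[OF finite_layer] card_layer[OF ranking_permutes assms(1)] assms(3,5) by metis
  qed
  then obtain s0 where s0: "s0 \<in> S - layer n r k" by blast
  have strict: "absorbs (x (f s)) (x s)" if s: "s \<in> S - layer n r k" for s
  proof -
    have "f s \<in> layer n r k" using f s by (auto dest: bij_betwE)
    hence "nu (x (f s)) \<noteq> nu (x s)" using assms(2,4) s unfolding layer_tied_def by blast
    thus ?thesis using ranked[OF s] by (rule nu_ge_imp_absorbs[rotated])
  qed
  have "absorbs (prod (x \<circ> f) (S - layer n r k)) (prod x (S - layer n r k))"
    using s0 finite_subset[OF _ finite_lessThan] assms(2)
    by (intro absorbs_prod[OF _ s0]) (auto simp: strict absorbs_or_eq_def)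
  from absorbs_mult[OF this, of "prod x (S \<inter> layer n r k)" "prod x (S \<inter> layer n r k)"]
  show ?thesis unfolding T S by (simp add: absorbs_or_eq_def mult.commute)
qed

lemma elem_sym_self_or_nu: "k < n \<Longrightarrow> self_or_nu (elem_sym n (Suc k) x) (prod x (layer n r k))"
  unfolding elem_sym_def
  by (rule sum_self_or_nu_top)
    (auto simp: finite_subsets_card layer_subset card_layer[OF ranking_permutes] intro: layer_prod_nu_ge)

lemma elem_sym_eq_layer_prod:
  "k < n \<Longrightarrow> \<not> layer_tied n x r k \<Longrightarrow> elem_sym n (Suc k) x = prod x (layer n r k)"
  unfolding elem_sym_def
  by (rule sum_eq_top_if_absorbs)
    (auto simp: finite_subsets_card layer_subset card_layer[OF ranking_permutes] intro: layer_prod_absorbs)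

lemma elem_sym_eq_nu_layer_prod:
  assumes "k < n" "layer_tied n x r k"
  shows "elem_sym n (Suc k) x = nu (prod x (layer n r k))"
proof -
  obtain i j where ij: "i \<in> layer n r k" "j < n" "j \<notin> layer n r k" "nu (x i) = nu (x j)"
    using assms(2) unfolding layer_tied_def by blast
  \<comment> \<open>swapping the tied pair turns the top layer into another subset of the same nu-value\<close>
  define \<tau> where "\<tau> = transpose i j"
  have \<tau>: "\<tau> permutes {..<n}"
    unfolding \<tau>_def using ij layer_subset by (intro permutes_swap_id) auto
  have inj: "inj_on \<tau> (layer n r k)" using permutes_inj[OF \<tau>] by (rule inj_on_subset) simp
  have "\<tau> ` layer n r k \<subseteq> {..<n}" by (metis image_mono layer_subset permutes_image[OF \<tau>])
  moreover have "card (\<tau> ` layer n r k) = Suc k"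
    using card_image[OF inj] card_layer[OF ranking_permutes assms(1)] by simp
  ultimately have swapped: "\<tau> ` layer n r k \<in> {S. S \<subseteq> {..<n} \<and> card S = Suc k}" by blast
  have "j \<in> \<tau> ` layer n r k"
    using ij(1) unfolding \<tau>_def by (intro image_eqI[of j _ i]) simp_all
  hence moved: "\<tau> ` layer n r k \<noteq> layer n r k" using ij(3) by blast
  have "nu (prod (x \<circ> \<tau>) (layer n r k)) = nu (prod x (layer n r k))"
    using ij(4) unfolding \<tau>_def by (intro nu_prod_eq nu_comp_transpose)
  hence same_nu: "nu (prod x (\<tau> ` layer n r k)) = nu (prod x (layer n r k))"
    by (simp add: prod.reindex[OF inj])
  have "sum (prod x) {S. S \<subseteq> {..<n} \<and> card S = Suc k} = nu (prod x (layer n r k))"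
  proof (rule sum_eq_nu_top[OF finite_subsets_card _ _ swapped moved same_nu])
    show "layer n r k \<in> {S. S \<subseteq> {..<n} \<and> card S = Suc k}"
      using layer_subset card_layer[OF ranking_permutes assms(1)] by blast
  qed (use layer_prod_nu_ge[OF assms(1)] in blast)
  thus ?thesis by (simp add: elem_sym_def)
qed

lemma monomial_arrange_nu_ge:
  "\<rho> permutes {..<n} \<Longrightarrow> nu_ge (monomial n x (arrange n d r)) (monomial n x (arrange n d \<rho>))"
  unfolding monomial_arrange
  by (intro nu_ge_prod nu_ge_power layer_prod_nu_ge) (simp_all add: layer_subset card_layer)

lemma orbit_sum_tied:
  assumes "0 < exp_gap n d k" "layer_tied n x r k"
  shows "(\<Sum>e\<in>orbit n d. monomial n x e) = nu (monomial n x (arrange n d r))"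
proof -
  obtain i j where ij: "i \<in> layer n r k" "j < n" "j \<notin> layer n r k" "nu (x i) = nu (x j)"
    using assms(2) unfolding layer_tied_def by blast
  \<comment> \<open>swapping the tied pair in the ranking gives a second dominant orbit element\<close>
  define \<tau> where "\<tau> = transpose i j"
  have \<tau>: "\<tau> permutes {..<n}"
    unfolding \<tau>_def using ij layer_subset by (intro permutes_swap_id) auto
  have "i \<notin> layer n (r \<circ> \<tau>) k" using ij(2,3) by (simp add: \<tau>_def layer_def)
  hence "layer n (r \<circ> \<tau>) k \<noteq> layer n r k" using ij(1) by blast
  hence moved: "arrange n d (r \<circ> \<tau>) \<noteq> arrange n d r"
    using assms(1) arrange_eq_iff_layers by blast
  have "nu (monomial n x (arrange n d (r \<circ> \<tau>))) = nu (monomial n (x \<circ> \<tau>) (arrange n d (r \<circ> \<tau>)))"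
    using nu_comp_transpose[of x i j] ij(4) unfolding \<tau>_def by (intro nu_monomial_eq) simp
  also have "\<dots> = nu (monomial n x (arrange n d r))" by (simp add: monomial_comp_arrange[OF \<tau>])
  finally have same_nu: "nu (monomial n x (arrange n d (r \<circ> \<tau>))) = nu (monomial n x (arrange n d r))" .
  show ?thesis
  proof (rule sum_eq_nu_top[of _ _ "monomial n x", OF finite_orbit _ _ _ moved same_nu])
    show "arrange n d r \<in> orbit n d" by (rule arrange_mem_orbit[OF ranking_permutes])
    show "arrange n d (r \<circ> \<tau>) \<in> orbit n d"
      by (rule arrange_mem_orbit[OF permutes_compose[OF \<tau> ranking_permutes]])
  qed (auto simp: orbit_eq_arrange_image monomial_arrange_nu_ge)
qed

lemma orbit_sum_untied:
  assumes "\<And>k. 0 < exp_gap n d k \<Longrightarrow> \<not> layer_tied n x r k"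
  shows "(\<Sum>e\<in>orbit n d. monomial n x e) = monomial n x (arrange n d r)"
proof (rule sum_eq_top_if_absorbs[OF finite_orbit arrange_mem_orbit[OF ranking_permutes]])
  fix e assume "e \<in> orbit n d - {arrange n d r}"
  then obtain \<rho> where \<rho>: "\<rho> permutes {..<n}" "e = arrange n d \<rho>" "arrange n d \<rho> \<noteq> arrange n d r"
    by (auto simp: orbit_eq_arrange_image)
  then obtain k0 where k0: "0 < exp_gap n d k0" "layer n \<rho> k0 \<noteq> layer n r k0"
    using arrange_eq_iff_layers by blast
  have strict: "absorbs (prod x (layer n r k) ^ exp_gap n d k) (prod x (layer n \<rho> k) ^ exp_gap n d k)"
    if "0 < exp_gap n d k" "layer n \<rho> k \<noteq> layer n r k" for k
    using that assms exp_gap_pos_imp_less[OF that(1)]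
    by (intro absorbs_power layer_prod_absorbs) (simp_all add: layer_subset card_layer[OF \<rho>(1)])
  have "absorbs (\<Prod>k<n. prod x (layer n r k) ^ exp_gap n d k)
                (\<Prod>k<n. prod x (layer n \<rho> k) ^ exp_gap n d k)"
  proof (rule absorbs_prod[of "{..<n}" k0])
    show "finite {..<n}" by simp
    show "k0 \<in> {..<n}" using exp_gap_pos_imp_less[OF k0(1)] by simp
    show "absorbs (prod x (layer n r k0) ^ exp_gap n d k0) (prod x (layer n \<rho> k0) ^ exp_gap n d k0)"
      using strict[OF k0] .
    fix k
    show "absorbs_or_eq (prod x (layer n r k) ^ exp_gap n d k) (prod x (layer n \<rho> k) ^ exp_gap n d k)"
      using strict[of k]
      by (cases "exp_gap n d k = 0 \<or> layer n \<rho> k = layer n r k") (auto simp: absorbs_or_eq_def)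
  qed
  thus "absorbs (monomial n x (arrange n d r)) (monomial n x e)" by (simp add: \<rho>(2) monomial_arrange)
qed

end

lemma orbit_sum_eq_monomial_elem_sym:
  fixes x :: "nat \<Rightarrow> 'a"
  shows "(\<Sum>e\<in>orbit n d. monomial n x e) = monomial n (\<lambda>k. elem_sym n (Suc k) x) (exp_gap n d)"
proof -
  obtain r where r: "nu_ranking n x r" by (rule exists_nu_ranking)
  show ?thesis
  proof (cases "\<exists>k. 0 < exp_gap n d k \<and> layer_tied n x r k")
    case True
    then obtain k where k: "0 < exp_gap n d k" "layer_tied n x r k" by blast
    have "monomial n (\<lambda>k. elem_sym n (Suc k) x) (exp_gap n d)
          = nu (\<Prod>k<n. prod x (layer n r k) ^ exp_gap n d k)"
      unfolding monomial_def using k exp_gap_pos_imp_less[OF k(1)]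
      by (intro prod_power_eq_nu[of _ k])
        (simp_all add: elem_sym_self_or_nu[OF r] elem_sym_eq_nu_layer_prod[OF r])
    thus ?thesis by (simp add: orbit_sum_tied[OF r k] monomial_arrange)
  next
    case False
    hence untied: "\<And>k. 0 < exp_gap n d k \<Longrightarrow> \<not> layer_tied n x r k" by blast
    have "monomial n (\<lambda>k. elem_sym n (Suc k) x) (exp_gap n d)
          = (\<Prod>k<n. prod x (layer n r k) ^ exp_gap n d k)"
      unfolding monomial_def
    proof (rule prod.cong[OF refl])
      fix k assume "k \<in> {..<n}"
      thus "elem_sym n (Suc k) x ^ exp_gap n d k = prod x (layer n r k) ^ exp_gap n d k"
        using untied[of k] elem_sym_eq_layer_prod[OF r]
        by (cases "exp_gap n d k = 0") simp_all
    qed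
    thus ?thesis by (simp add: orbit_sum_untied[OF r untied] monomial_arrange)
  qed
qed

end

theorem theorem5p9:
  assumes "supertropical TYPE('a::{comm_semiring_0, comm_monoid_mult})"
  shows "fully_elementary TYPE('a)"
  unfolding fully_elementary_def n_elementary_def
proof (intro allI impI)
  fix n :: nat and P :: "('a \<times> (nat \<Rightarrow> nat)) set"
  assume P: "symmetric_expr n P"
  show "\<exists>R. finite R \<and> (\<forall>x. poly_eval P n x = poly_eval R n (\<lambda>i. elem_sym n (Suc i) x))"
  proof (intro exI conjI allI)
    show "finite (orbit_code n ` P)" using P by (simp add: symmetric_expr_def)
    show "poly_eval P n x = poly_eval (orbit_code n ` P) n (\<lambda>i. elem_sym n (Suc i) x)" for x
      using P orbit_sum_eq_monomial_elem_sym[OF assms] by (rule poly_eval_symmetric_eq)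
  qed
qed

end
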